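(* Let $s\ge 1$, $r\ge 2$ and $n_0,\dots,n_s\ge 1$ be integers such that $\sum_{i=0}^s n_i^{-\frac{1}{r-1}}\ge s^{\frac{r}{r-1}}$. For $0\le i\le s$ let $$p_i=1-\frac{s\,n_i^{-\frac{1}{r-1}}}{\sum_{j=0}^s n_j^{-\frac{1}{r-1}}}.$$ Then $0\le p_i\le 1$ for each $0\le i\le s$, $\sum_{i=0}^s p_i=1$, and $\sum_{i=0}^s n_i(1-p_i)^r\le 1$. *)

theory Defs
  imports Complex_Main
begin

end

theory Submission
  imports Defs
begin

text \<open>Put \<open>w i = n i powr (-1/(r-1))\<close> and \<open>S = (\<Sum>j. w j)\<close>, so that \<open>1 - p i = s * w i / S\<close>.
  From \<open>n i \<ge> 1\<close> we get \<open>w i \<le> 1\<close>, and the hypothesis gives \<open>s \<le> S\<close>; so each \<open>p i\<close> lies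
  in \<open>[0, 1]\<close>, and \<open>\<Sum>i. p i = (s + 1) - s = 1\<close>. The exponent \<open>-1/(r-1)\<close> is the one making
  \<open>n i * w i ^ r = w i\<close>, hence \<open>\<Sum>i. n i * (1 - p i) ^ r = s ^ r / S ^ (r - 1)\<close>, which is at
  most 1 exactly when \<open>S \<ge> s powr (r/(r-1))\<close>.\<close>

lemma mult_power_powr_neg_inverse_pred:
  fixes x :: real and r :: nat
  assumes "0 < x" and "r \<noteq> 1"
  shows "x * (x powr (- 1 / (real r - 1))) ^ r = x powr (- 1 / (real r - 1))"
proof -
  let ?e = "- 1 / (real r - 1)"
  have "(x powr ?e) ^ r = x powr (?e * real r)"
    using assms(1) by (simp only: powr_realpow[symmetric] powr_gt_zero powr_powr)
  then have "x * (x powr ?e) ^ r = x powr 1 * x powr (?e * real r)"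
    using assms(1) by simp
  also have "\<dots> = x powr (1 + ?e * real r)"
    by (simp only: powr_add)
  also have "1 + ?e * real r = ?e"
    using assms(2) by (simp add: field_simps)
  finally show ?thesis .
qed

lemma power_le_power_pred_if_powr_le:
  fixes c S :: real and r :: nat
  assumes "0 \<le> c" and "2 \<le> r" and "c powr (real r / (real r - 1)) \<le> S"
  shows "c ^ r \<le> S ^ (r - 1)"
proof -
  have "c ^ r = c powr real r"
    using assms(1,2) by (cases "c = 0") (simp_all add: powr_realpow)
  also have "\<dots> = (c powr (real r / (real r - 1))) powr (real r - 1)"
    using assms(2) by (simp add: powr_powr)
  also have "\<dots> \<le> S powr (real r - 1)"
    using assms by (intro powr_mono2) auto
  also have "\<dots> = S ^ (r - 1)"
  proof (cases "S = 0")
    case False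
    have "0 \<le> S" using assms(3) powr_ge_zero order_trans by blast
    with False show ?thesis using assms(2) by (simp add: powr_realpow[symmetric] of_nat_diff)
  qed (use assms(2) in simp)
  finally show ?thesis .
qed

lemma one_minus_scaled_weight_bounds:
  fixes c w S :: real
  assumes "0 \<le> w" and "w \<le> 1" and "0 \<le> c" and "c \<le> S"
  shows "0 \<le> 1 - c * w / S" and "1 - c * w / S \<le> 1"
proof -
  have "c * w \<le> S" using assms mult_left_le[of w c] by linarith
  then show "0 \<le> 1 - c * w / S"
    using assms by (cases "S = 0") (simp_all add: field_simps)
  show "1 - c * w / S \<le> 1"
    using assms by simp
qed

lemma sum_one_minus_scaled_weights:
  fixes w :: "'a \<Rightarrow> real"
  assumes "sum w A \<noteq> 0"
  shows "(\<Sum>i\<in>A. 1 - c * w i / sum w A) = real (card A) - c"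
  using assms by (simp add: sum_subtractf sum_divide_distrib[symmetric] sum_distrib_left[symmetric])

lemma sum_mult_power_scaled_weights:
  fixes w m :: "'a \<Rightarrow> real" and r :: nat
  assumes "\<forall>i\<in>A. m i * w i ^ r = w i" and "sum w A \<noteq> 0" and "1 \<le> r"
  shows "(\<Sum>i\<in>A. m i * (c * w i / sum w A) ^ r) = c ^ r / sum w A ^ (r - 1)"
proof -
  let ?S = "sum w A"
  have "(\<Sum>i\<in>A. m i * (c * w i / ?S) ^ r) = (\<Sum>i\<in>A. (c / ?S) ^ r * (m i * w i ^ r))"
    by (simp add: power_mult_distrib power_divide mult_ac)
  also have "\<dots> = (c / ?S) ^ r * ?S"
    using assms(1) by (simp add: sum_distrib_left)
  also have "\<dots> = c ^ r / ?S ^ (r - 1)"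
    using assms(2,3) by (cases r) (simp_all add: power_divide)
  finally show ?thesis .
qed

theorem lemma5p2:
  fixes s r :: nat and n :: "nat \<Rightarrow> nat" and p :: "nat \<Rightarrow> real"
  assumes hs: "s \<ge> 1" and hr: "r \<ge> 2"
    and hn: "\<forall>i\<in>{0..s}. n i \<ge> 1"
    and hsum: "(\<Sum>i=0..s. real (n i) powr (- 1 / (real r - 1))) \<ge> real s powr (real r / (real r - 1))"
    and hp: "\<forall>i\<in>{0..s}. p i = 1 - real s * real (n i) powr (- 1 / (real r - 1))
               / (\<Sum>j=0..s. real (n j) powr (- 1 / (real r - 1)))"
  shows "(\<forall>i\<in>{0..s}. 0 \<le> p i \<and> p i \<le> 1) \<and> (\<Sum>i=0..s. p i) = 1
         \<and> (\<Sum>i=0..s. real (n i) * (1 - p i) ^ r) \<le> 1"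
proof -
  define w where "w i = real (n i) powr (- 1 / (real r - 1))" for i
  define S where "S = sum w {0..s}"
  have p_eq: "p i = 1 - real s * w i / S" if "i \<in> {0..s}" for i
    using hp that by (simp add: w_def S_def)
  have w_le_1: "w i \<le> 1" if "i \<in> {0..s}" for i
    using hn that hr powr_mono[of "- 1 / (real r - 1)" 0 "real (n i)"] by (force simp: w_def)
  have "real s \<le> real s powr (real r / (real r - 1))"
    using hs hr powr_mono[of 1 "real r / (real r - 1)" "real s"] by (simp add: field_simps)
  also have "\<dots> \<le> S" using hsum by (simp add: w_def S_def)
  finally have s_le_S: "real s \<le> S" .
  with hs have S_ne_0: "S \<noteq> 0" by auto
  have bounds: "\<forall>i\<in>{0..s}. 0 \<le> p i \<and> p i \<le> 1"
    using one_minus_scaled_weight_bounds[OF _ w_le_1 _ s_le_S] p_eq by (simp add: w_def)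
  have "(\<Sum>i=0..s. p i) = (\<Sum>i=0..s. 1 - real s * w i / S)" by (simp add: p_eq)
  also have "\<dots> = 1" using sum_one_minus_scaled_weights[of w "{0..s}"] S_ne_0 by (simp add: S_def)
  finally have sum_p: "(\<Sum>i=0..s. p i) = 1" .
  have "\<forall>i\<in>{0..s}. real (n i) * w i ^ r = w i"
    using hn hr unfolding w_def by (intro ballI mult_power_powr_neg_inverse_pred) (auto simp: Suc_le_eq)
  then have "(\<Sum>i=0..s. real (n i) * (1 - p i) ^ r) = real s ^ r / S ^ (r - 1)"
    using sum_mult_power_scaled_weights[of "{0..s}"] S_ne_0 hr by (simp add: p_eq S_def)
  also have "\<dots> \<le> 1"
    using power_le_power_pred_if_powr_le[of "real s" r S] hsum hr s_le_S hs
    by (simp add: w_def S_def)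
  finally show ?thesis using bounds sum_p by blast
qed

end
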